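(* Let $G$ be an arbitrary connected graph on $n$ vertices, let $0<p<\frac{1}{2}$ be a noise parameter and let $0<\delta<\frac{1}{2}$ be a confidence threshold. There exists an adaptive Las Vegas graph searching algorithm (in the noisy graph search model described in the context, with an adversarially fixed target) that, after an expected number of at most $$\frac{1}{I(p)}\left(\log_2 n+\mathcal{O}(\log\log n)+\mathcal{O}(\log \delta^{-1})\right)$$ queries, returns the target correctly with probability at least $1-\delta$, for every choice of the target.
   Context: Noisy graph search model: $G=(V,E)$ is an undirected, unweighted connected graph and $v^*\in V$ is an unknown target. In each step the algorithm queries a vertex $q$. A correct answer is "yes" if $q=v^*$, and otherwise is a neighbor $u$ of $q$ lying on a shortest path from $q$ to $v^*$. Each answer, independently, is erroneous with probability $p$ (in which case it may be an arbitrary different answer); otherwise it is correct. The algorithm is adaptive; in the adversarial model the target is fixed in advance by an adversary who knows the algorithm, and in the Las Vegas setting the number of queries is random and the bound is on its expectation (for every fixed target). $H(p)=-p\log_2 p-(1-p)\log_2(1-p)$ and $I(p)=1-H(p)$. *)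

theory Defs
  imports "HOL-Probability.Probability"
begin

definition Hb :: "real \<Rightarrow> real" where
  "Hb p = - p * log 2 p - (1 - p) * log 2 (1 - p)"

definition Ip :: "real \<Rightarrow> real" where
  "Ip p = 1 - Hb p"

definition graph_ok :: "nat set \<Rightarrow> (nat \<Rightarrow> nat \<Rightarrow> bool) \<Rightarrow> bool" where
  "graph_ok V E \<longleftrightarrow> finite V \<and> V \<noteq> {} \<and>
     (\<forall>x y. E x y \<longrightarrow> x \<in> V \<and> y \<in> V \<and> E y x \<and> x \<noteq> y) \<and>
     (\<forall>u\<in>V. \<forall>v\<in>V. (u, v) \<in> {(x, y). E x y}\<^sup>*)"

definition gdist :: "(nat \<Rightarrow> nat \<Rightarrow> bool) \<Rightarrow> nat \<Rightarrow> nat \<Rightarrow> nat" where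
  "gdist E u v = (LEAST k. (u, v) \<in> {(x, y). E x y} ^^ k)"

text \<open>Answers: None = "yes", Some u = neighbour u.\<close>
definition correct_answers :: "(nat \<Rightarrow> nat \<Rightarrow> bool) \<Rightarrow> nat \<Rightarrow> nat \<Rightarrow> nat option set" where
  "correct_answers E q t =
     (if q = t then {None}
      else Some ` {u. E q u \<and> gdist E u t + 1 = gdist E q t})"

definition other_answers :: "(nat \<Rightarrow> nat \<Rightarrow> bool) \<Rightarrow> nat \<Rightarrow> nat option \<Rightarrow> nat option set" where
  "other_answers E q c = insert None (Some ` {u. E q u}) - {c}"

type_synonym history = "(nat \<times> nat option) list"

datatype action = Ask nat | Output nat

datatype state = Running history | Halted nat

text \<open>An adversary (knowing the target t) chooses, depending on the history and
  the query, which correct answer is given and which erroneous answer is given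
  in case of an error.\<close>
definition valid_adversary ::
  "nat set \<Rightarrow> (nat \<Rightarrow> nat \<Rightarrow> bool) \<Rightarrow> nat \<Rightarrow> (history \<Rightarrow> nat \<Rightarrow> nat option \<times> nat option) \<Rightarrow> bool" where
  "valid_adversary V E t adv \<longleftrightarrow>
     (\<forall>h q. q \<in> V \<longrightarrow>
        fst (adv h q) \<in> correct_answers E q t \<and>
        (if other_answers E q (fst (adv h q)) = {} then snd (adv h q) = fst (adv h q)
         else snd (adv h q) \<in> other_answers E q (fst (adv h q))))"

definition valid_alg :: "nat set \<Rightarrow> (history \<Rightarrow> action pmf) \<Rightarrow> bool" where
  "valid_alg V alg \<longleftrightarrow> (\<forall>h q. Ask q \<in> set_pmf (alg h) \<longrightarrow> q \<in> V)"

definition answer_pmf ::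
  "real \<Rightarrow> (history \<Rightarrow> nat \<Rightarrow> nat option \<times> nat option) \<Rightarrow> history \<Rightarrow> nat \<Rightarrow> nat option pmf" where
  "answer_pmf p adv h q =
     map_pmf (\<lambda>err. if err then snd (adv h q) else fst (adv h q)) (bernoulli_pmf p)"

definition step ::
  "(history \<Rightarrow> action pmf) \<Rightarrow> real \<Rightarrow> (history \<Rightarrow> nat \<Rightarrow> nat option \<times> nat option) \<Rightarrow> state \<Rightarrow> state pmf" where
  "step alg p adv s = (case s of
      Halted v \<Rightarrow> return_pmf (Halted v)
    | Running h \<Rightarrow> bind_pmf (alg h) (\<lambda>a. case a of
          Output v \<Rightarrow> return_pmf (Halted v)
        | Ask q \<Rightarrow> map_pmf (\<lambda>ans. Running (h @ [(q, ans)])) (answer_pmf p adv h q)))"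

primrec run ::
  "(history \<Rightarrow> action pmf) \<Rightarrow> real \<Rightarrow> (history \<Rightarrow> nat \<Rightarrow> nat option \<times> nat option) \<Rightarrow> nat \<Rightarrow> state pmf" where
  "run alg p adv 0 = return_pmf (Running [])"
| "run alg p adv (Suc k) = bind_pmf (run alg p adv k) (step alg p adv)"

definition is_running :: "state \<Rightarrow> bool" where
  "is_running s = (case s of Running _ \<Rightarrow> True | Halted _ \<Rightarrow> False)"

text \<open>Expected number of queries T: E[T] = sum over k of P(T > k), and T > k iff
  the process is still running after k+1 rounds (it has then asked k+1 queries).
  Value \<infinity> if the algorithm does not terminate almost surely.\<close>
definition expected_queries ::
  "(history \<Rightarrow> action pmf) \<Rightarrow> real \<Rightarrow> (history \<Rightarrow> nat \<Rightarrow> nat option \<times> nat option) \<Rightarrow> ennreal" where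
  "expected_queries alg p adv =
     (\<Sum>k. ennreal (measure_pmf.prob (run alg p adv (Suc k)) {s. is_running s}))"

definition success_prob ::
  "(history \<Rightarrow> action pmf) \<Rightarrow> real \<Rightarrow> (history \<Rightarrow> nat \<Rightarrow> nat option \<times> nat option) \<Rightarrow> nat \<Rightarrow> real" where
  "success_prob alg p adv t = (SUP k. measure_pmf.prob (run alg p adv k) {Halted t})"

end

theory Submission
  imports Defs
begin

text \<open>The algorithm keeps multiplicative weights: a vertex v gains the factor 2(1 - p) for every
  answer that would be correct if v were the target and the factor 2p for every other answer. It
  outputs a vertex as soon as its "yes" answers outnumber its other answers by K; otherwise it
  queries a vertex carrying more than half of the total weight if there is one, and a weighted
  1-median of the graph otherwise. At a 1-median every answer other than "yes" is consistent with
  at most half of the weight, so the logarithm of the weight share of the target grows by at least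
  I(p) per query in expectation; when the heavy vertex is the target itself its capped yes-surplus
  grows by 1 - 2p instead. Hence the potential log2 (w_t / W) + min (surplus_t, K) / (1 - 2p)
  drifts upwards by I(p) per query, starts at -log2 n and never exceeds K / (1 - 2p), which bounds
  the expected number of queries by (log2 n + K / (1 - 2p)) / I(p). A wrong output needs a
  surplus K at a non-target vertex, while the sum of ((1 - p) / p)^surplus over the queried
  non-target vertices grows by at most one per query in expectation; so a wrong output has
  probability at most E[T] (p / (1 - p))^K. A threshold K of order log log n + log (1 / delta)
  balances the two bounds.\<close>

section \<open>Expected drift of the search process\<close>

lemma finite_set_pmf_step:
  assumes "\<And>h. finite (set_pmf (alg h))"
  shows "finite (set_pmf (step alg p adv s))"
  using assms by (auto simp: step_def answer_pmf_def split: state.split action.split)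

lemma finite_set_pmf_run:
  assumes "\<And>h. finite (set_pmf (alg h))"
  shows "finite (set_pmf (run alg p adv k))"
  by (induction k) (auto simp: finite_set_pmf_step[OF assms])

lemma expectation_run_Suc:
  fixes f :: "state \<Rightarrow> real"
  assumes "\<And>h. finite (set_pmf (alg h))"
  shows "measure_pmf.expectation (run alg p adv (Suc k)) f =
    (\<Sum>s\<in>set_pmf (run alg p adv k).
      pmf (run alg p adv k) s * measure_pmf.expectation (step alg p adv s) f)"
proof -
  have "measure_pmf.expectation (run alg p adv k \<bind> step alg p adv) f =
    (\<Sum>s\<in>set_pmf (run alg p adv k).
      pmf (run alg p adv k) s *\<^sub>R measure_pmf.expectation (step alg p adv s) f)"
    by (rule pmf_expectation_bind)
      (auto simp: finite_set_pmf_run[OF assms] finite_set_pmf_step[OF assms])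
  then show ?thesis by simp
qed

definition expected_queries_upto ::
  "(history \<Rightarrow> action pmf) \<Rightarrow> real \<Rightarrow> (history \<Rightarrow> nat \<Rightarrow> nat option \<times> nat option) \<Rightarrow> nat \<Rightarrow> real" where
  "expected_queries_upto alg p adv k =
    (\<Sum>j<k. measure_pmf.prob (run alg p adv (Suc j)) {s. is_running s})"

lemma expectation_run_drift:
  fixes f :: "state \<Rightarrow> real"
  assumes fin: "\<And>h. finite (set_pmf (alg h))"
    and drift: "\<And>s. f s + c * measure_pmf.prob (step alg p adv s) {s. is_running s}
                    \<le> measure_pmf.expectation (step alg p adv s) f"
  shows "f (Running []) + c * expected_queries_upto alg p adv k
    \<le> measure_pmf.expectation (run alg p adv k) f"
proof (induction k)
  case 0
  show ?case by (simp add: expected_queries_upto_def)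
next
  case (Suc k)
  let ?M = "run alg p adv k" and ?R = "{s. is_running s}"
  have "f (Running []) + c * expected_queries_upto alg p adv (Suc k)
      = f (Running []) + c * expected_queries_upto alg p adv k
        + c * measure_pmf.prob (run alg p adv (Suc k)) ?R"
    by (simp add: expected_queries_upto_def algebra_simps del: run.simps)
  also have "\<dots> \<le> measure_pmf.expectation ?M f + c * measure_pmf.prob (run alg p adv (Suc k)) ?R"
    using Suc by simp
  also have "\<dots> = (\<Sum>s\<in>set_pmf ?M. pmf ?M s * (f s + c * measure_pmf.prob (step alg p adv s) ?R))"
    using expectation_run_Suc[OF fin, where k=k and f="indicator ?R"]
      integral_measure_pmf[OF finite_set_pmf_run[OF fin], of ?M f]
    by (simp add: algebra_simps sum.distrib sum_distrib_left del: run.simps)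
  also have "\<dots> \<le> (\<Sum>s\<in>set_pmf ?M. pmf ?M s * measure_pmf.expectation (step alg p adv s) f)"
    by (intro sum_mono mult_left_mono drift) simp
  also have "\<dots> = measure_pmf.expectation (run alg p adv (Suc k)) f"
    by (rule expectation_run_Suc[OF fin, symmetric])
  finally show ?case .
qed

lemma expectation_run_drift_le:
  fixes f :: "state \<Rightarrow> real"
  assumes fin: "\<And>h. finite (set_pmf (alg h))"
    and drift: "\<And>s. measure_pmf.expectation (step alg p adv s) f
                    \<le> f s + c * measure_pmf.prob (step alg p adv s) {s. is_running s}"
  shows "measure_pmf.expectation (run alg p adv k) f
    \<le> f (Running []) + c * expected_queries_upto alg p adv k"
proof -
  have "- f (Running []) + (- c) * expected_queries_upto alg p adv k
      \<le> measure_pmf.expectation (run alg p adv k) (\<lambda>s. - f s)"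
    using drift by (intro expectation_run_drift[where f="\<lambda>s. - f s", OF fin]) (simp add: algebra_simps)
  then show ?thesis by simp
qed

lemma step_Running_Output:
  "alg h = return_pmf (Output v) \<Longrightarrow> step alg p adv (Running h) = return_pmf (Halted v)"
  by (simp add: step_def bind_return_pmf)

lemma expectation_step_Ask:
  fixes f :: "state \<Rightarrow> real"
  assumes "alg h = return_pmf (Ask q)" "0 \<le> p" "p \<le> 1"
  shows "measure_pmf.expectation (step alg p adv (Running h)) f =
    p * f (Running (h @ [(q, snd (adv h q))])) + (1 - p) * f (Running (h @ [(q, fst (adv h q))]))"
  using assms by (simp add: step_def bind_return_pmf answer_pmf_def)

lemma prob_running_step_Ask:
  assumes "alg h = return_pmf (Ask q)" "0 \<le> p" "p \<le> 1"
  shows "measure_pmf.prob (step alg p adv (Running h)) {s. is_running s} = 1"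
  using expectation_step_Ask[where alg=alg and h=h and q=q, OF assms,
      where adv=adv and f="indicator {s. is_running s}"]
  by (simp add: is_running_def)

lemma expected_queries_le:
  assumes "\<And>k. expected_queries_upto alg p adv k \<le> B"
  shows "expected_queries alg p adv \<le> ennreal B"
proof -
  have "(\<Sum>j<k. ennreal (measure_pmf.prob (run alg p adv (Suc j)) {s. is_running s})) + 0
      \<le> ennreal B" for k
    using assms[of k] by (simp add: expected_queries_upto_def ennreal_leI del: run.simps)
  then show ?thesis
    unfolding expected_queries_def using ennreal_suminf_bound_add by (metis add_0_right)
qed

lemma success_prob_ge:
  assumes queries: "\<And>k. expected_queries_upto alg p adv k \<le> B"
    and wrong: "\<And>k. measure_pmf.prob (run alg p adv k) {Halted v |v. v \<noteq> t} \<le> e"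
  shows "1 - e \<le> success_prob alg p adv t"
proof (rule field_le_epsilon)
  fix \<epsilon> :: real
  assume "0 < \<epsilon>"
  let ?running = "\<lambda>k. measure_pmf.prob (run alg p adv k) {s. is_running s}"
  have "summable (\<lambda>j. ?running (Suc j))"
  proof (rule bounded_imp_summable)
    show "(\<Sum>j\<le>n. ?running (Suc j)) \<le> B" for n
      using queries[of "Suc n"]
      by (simp add: expected_queries_upto_def lessThan_Suc_atMost del: run.simps)
  qed simp
  then have "(\<lambda>j. ?running (Suc j)) \<longlonglongrightarrow> 0"
    by (rule summable_LIMSEQ_zero)
  then obtain j where j: "?running (Suc j) < \<epsilon>"
    using \<open>0 < \<epsilon>\<close> by (auto simp: lim_sequentially dist_real_def)
  let ?M = "run alg p adv (Suc j)"
  have "measure_pmf.prob ?M (- {Halted t})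
      \<le> measure_pmf.prob ?M ({s. is_running s} \<union> {Halted v |v. v \<noteq> t})"
    by (rule measure_pmf.finite_measure_mono) (auto simp: is_running_def split: state.split)
  also have "\<dots> \<le> ?running (Suc j) + measure_pmf.prob ?M {Halted v |v. v \<noteq> t}"
    by (rule measure_Un_le) simp_all
  finally have "1 - e \<le> measure_pmf.prob ?M {Halted t} + \<epsilon>"
    using measure_pmf.prob_compl[of "{Halted t}" ?M] j wrong[of "Suc j"]
    by (simp add: Compl_eq_Diff_UNIV)
  also have "measure_pmf.prob ?M {Halted t} \<le> success_prob alg p adv t"
    unfolding success_prob_def by (rule cSUP_upper) (auto intro!: bdd_aboveI[of _ 1])
  finally show "1 - e \<le> success_prob alg p adv t + \<epsilon>" by simp
qed

section \<open>Weighted medians of graphs\<close>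

lemma gdist_le: "(u, v) \<in> {(x, y). E x y} ^^ k \<Longrightarrow> gdist E u v \<le> k"
  unfolding gdist_def by (rule Least_le)

lemma gdist_walk:
  assumes "graph_ok V E" "u \<in> V" "v \<in> V"
  shows "(u, v) \<in> {(x, y). E x y} ^^ gdist E u v"
proof -
  from assms have "(u, v) \<in> {(x, y). E x y}\<^sup>*" by (auto simp: graph_ok_def)
  then obtain k where "(u, v) \<in> {(x, y). E x y} ^^ k" using rtrancl_power by blast
  then show ?thesis unfolding gdist_def by (rule LeastI)
qed

lemma gdist_neighbour_le:
  assumes graph: "graph_ok V E" and "E q u" "v \<in> V"
  shows "gdist E u v \<le> gdist E q v + 1"
proof -
  have "q \<in> V" "E u q" using assms by (auto simp: graph_ok_def)
  then have "(u, v) \<in> {(x, y). E x y} ^^ Suc (gdist E q v)"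
    using gdist_walk[OF graph \<open>q \<in> V\<close> \<open>v \<in> V\<close>] by (intro relpow_Suc_I2) auto
  then show ?thesis using gdist_le by fastforce
qed

text \<open>Stepping from q to u shortens the distance by one exactly to the vertices behind u
  and lengthens it by at most one to all others, so a weighted 1-median q cannot have more
  than half of the weight behind any neighbour.\<close>
lemma weighted_median_halves:
  fixes w :: "nat \<Rightarrow> real"
  assumes graph: "graph_ok V E" and w: "\<And>v. v \<in> V \<Longrightarrow> 0 \<le> w v" and "E q u"
    and median: "\<And>q'. q' \<in> V \<Longrightarrow> (\<Sum>v\<in>V. w v * gdist E q v) \<le> (\<Sum>v\<in>V. w v * gdist E q' v)"
  shows "2 * (\<Sum>v\<in>{v\<in>V. gdist E u v + 1 = gdist E q v}. w v) \<le> (\<Sum>v\<in>V. w v)"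
proof -
  have fin: "finite V" and "u \<in> V" using graph \<open>E q u\<close> by (auto simp: graph_ok_def)
  let ?behind = "\<lambda>v. gdist E u v + 1 = gdist E q v"
  have pointwise: "w v * gdist E u v \<le> w v * (gdist E q v + 1) - 2 * (if ?behind v then w v else 0)"
    if "v \<in> V" for v
  proof (cases "?behind v")
    case True
    then have "real (gdist E u v) = real (gdist E q v) - 1" by linarith
    then have "w v * gdist E u v = w v * gdist E q v - w v" by (simp add: right_diff_distrib)
    then show ?thesis using True by (simp add: distrib_left)
  next
    case False
    have "real (gdist E u v) \<le> real (gdist E q v) + 1"
      using gdist_neighbour_le[OF graph \<open>E q u\<close> that] by linarith
    then show ?thesis using False w[OF that] by (simp add: mult_left_mono)
  qed
  have "(\<Sum>v\<in>V. w v * gdist E q v) \<le> (\<Sum>v\<in>V. w v * gdist E u v)"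
    by (rule median[OF \<open>u \<in> V\<close>])
  also have "\<dots> \<le> (\<Sum>v\<in>V. w v * (gdist E q v + 1) - 2 * (if ?behind v then w v else 0))"
    by (rule sum_mono) (rule pointwise)
  also have "\<dots> = (\<Sum>v\<in>V. w v * gdist E q v) + (\<Sum>v\<in>V. w v) - 2 * (\<Sum>v\<in>{v\<in>V. ?behind v}. w v)"
    by (simp add: sum_subtractf sum.distrib algebra_simps sum_distrib_left[symmetric]
        sum.inter_filter[OF fin])
  finally show ?thesis by simp
qed

section \<open>Entropy estimates\<close>

lemma Ip_altdef:
  assumes "0 < p" "p < 1"
  shows "Ip p = (1 - p) * log 2 (2 * (1 - p)) + p * log 2 (2 * p)"
proof -
  have "log 2 (2 * (1 - p)) = 1 + log 2 (1 - p)" "log 2 (2 * p) = 1 + log 2 p"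
    using assms by (subst log_mult; simp)+
  then show ?thesis by (simp add: Ip_def Hb_def algebra_simps)
qed

lemma Ip_pos:
  assumes "0 < p" "p < 1/2"
  shows "0 < Ip p"
proof -
  have "ln (1 / (2 * (1 - p))) \<le> 1 / (2 * (1 - p)) - 1"
    using assms by (intro ln_le_minus_one) auto
  moreover have "ln (1 / (2 * p)) < 1 / (2 * p) - 1"
    using assms ln_le_minus_one[of "1 / (2 * p)"] ln_eq_minus_one[of "1 / (2 * p)"]
    by (fastforce simp: field_simps)
  ultimately have "(1 - p) * ln (1 / (2 * (1 - p))) + p * ln (1 / (2 * p))
      < (1 - p) * (1 / (2 * (1 - p)) - 1) + p * (1 / (2 * p) - 1)"
    using assms by (intro add_le_less_mono mult_left_mono mult_strict_left_mono) auto
  also have "\<dots> = 0" using assms by (simp add: field_simps)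
  finally have "0 < (1 - p) * ln (2 * (1 - p)) + p * ln (2 * p)"
    using assms by (simp add: ln_div)
  then show ?thesis
    using assms by (simp add: Ip_altdef log_def add_divide_distrib[symmetric])
qed

text \<open>The total weight is multiplied by this factor when the given answer is consistent
  with a fraction s of it: consistent vertices gain a factor 2(1-p), the others 2p.\<close>
definition update_ratio :: "real \<Rightarrow> real \<Rightarrow> real" where
  "update_ratio p s = 2 * p + 2 * (1 - 2 * p) * s"

lemma update_ratio_pos: "0 < p \<Longrightarrow> p < 1/2 \<Longrightarrow> 0 \<le> s \<Longrightarrow> 0 < update_ratio p s"
  unfolding update_ratio_def by (simp add: add_pos_nonneg)

lemma log_update_ratio_le_1:
  assumes "0 < p" "p < 1/2" "0 \<le> s" "s \<le> 1"
  shows "log 2 (update_ratio p s) \<le> 1"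
proof -
  have "(1 - 2 * p) * s \<le> 1 - 2 * p" using assms by (intro mult_left_le) auto
  then have "update_ratio p s \<le> 2" unfolding update_ratio_def using assms by linarith
  then show ?thesis using assms update_ratio_pos[of p s] by simp
qed

lemma expected_log_update_ratio_nonpos:
  assumes p: "0 < p" "p < 1/2"
    and s: "0 \<le> sc" "sc \<le> 1/2" "0 \<le> se" "sc + se \<le> 1"
  shows "(1 - p) * log 2 (update_ratio p sc) + p * log 2 (update_ratio p se) \<le> 0"
proof -
  define x where "x = (1 - 2 * p) * (1 - 2 * sc)"
  have "0 \<le> x" using p s by (simp add: x_def)
  have "x \<le> 1 - 2 * p" unfolding x_def using p s by (intro mult_left_le) auto
  then have "x < 1" using p by linarith
  have sc_eq: "update_ratio p sc = 1 - x"
    by (simp add: update_ratio_def x_def algebra_simps)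
  have se_le: "update_ratio p se \<le> 1 + x"
    using p s mult_left_mono[of se "1 - sc" "1 - 2 * p"]
    by (simp add: update_ratio_def x_def algebra_simps)
  have "ln (1 - x) \<le> - x"
    using ln_le_minus_one[of "1 - x"] \<open>x < 1\<close> by simp
  moreover have "ln (update_ratio p se) \<le> x"
    using se_le update_ratio_pos[OF p \<open>0 \<le> se\<close>] ln_add_one_self_le_self[OF \<open>0 \<le> x\<close>]
    by (meson ln_le_cancel_iff add_pos_nonneg \<open>0 \<le> x\<close> zero_less_one order_trans)
  ultimately have "(1 - p) * ln (1 - x) + p * ln (update_ratio p se) \<le> (1 - p) * (- x) + p * x"
    using p by (intro add_mono mult_left_mono) auto
  also have "\<dots> = - ((1 - 2 * p) * x)" by (simp add: algebra_simps)
  also have "\<dots> \<le> 0" using p \<open>0 \<le> x\<close> by simp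
  finally show ?thesis
    by (simp add: sc_eq log_def add_divide_distrib[symmetric] divide_nonpos_pos)
qed

section \<open>The multiplicative-weights search algorithm\<close>

definition answer_factor :: "real \<Rightarrow> (nat \<Rightarrow> nat \<Rightarrow> bool) \<Rightarrow> nat \<times> nat option \<Rightarrow> nat \<Rightarrow> real" where
  "answer_factor p E x v = (if snd x \<in> correct_answers E (fst x) v then 2 * (1 - p) else 2 * p)"

definition weight :: "real \<Rightarrow> (nat \<Rightarrow> nat \<Rightarrow> bool) \<Rightarrow> history \<Rightarrow> nat \<Rightarrow> real" where
  "weight p E h v = prod_list (map (\<lambda>x. answer_factor p E x v) h)"

definition total_weight :: "real \<Rightarrow> (nat \<Rightarrow> nat \<Rightarrow> bool) \<Rightarrow> nat set \<Rightarrow> history \<Rightarrow> real" where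
  "total_weight p E V h = (\<Sum>v\<in>V. weight p E h v)"

definition consistent_weight ::
  "real \<Rightarrow> (nat \<Rightarrow> nat \<Rightarrow> bool) \<Rightarrow> nat set \<Rightarrow> history \<Rightarrow> nat \<Rightarrow> nat option \<Rightarrow> real" where
  "consistent_weight p E V h q a = (\<Sum>v\<in>{v\<in>V. a \<in> correct_answers E q v}. weight p E h v)"

definition yes_surplus :: "history \<Rightarrow> nat \<Rightarrow> int" where
  "yes_surplus h v = (\<Sum>x\<leftarrow>h. if fst x = v then (if snd x = None then 1 else -1) else 0)"

lemma weight_Nil [simp]: "weight p E [] v = 1"
  by (simp add: weight_def)

lemma weight_snoc [simp]: "weight p E (h @ [x]) v = weight p E h v * answer_factor p E x v"
  by (simp add: weight_def)

lemma weight_pos: "0 < p \<Longrightarrow> p < 1 \<Longrightarrow> 0 < weight p E h v"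
  by (induction h rule: rev_induct) (simp_all add: answer_factor_def)

lemma total_weight_snoc:
  assumes "finite V"
  shows "total_weight p E V (h @ [(q, a)]) =
    2 * p * total_weight p E V h + 2 * (1 - 2 * p) * consistent_weight p E V h q a"
proof -
  have "total_weight p E V (h @ [(q, a)]) = (\<Sum>v\<in>V. 2 * p * weight p E h v +
      2 * (1 - 2 * p) * (if a \<in> correct_answers E q v then weight p E h v else 0))"
    unfolding total_weight_def by (intro sum.cong) (auto simp: answer_factor_def algebra_simps)
  then show ?thesis
    by (simp add: sum.distrib total_weight_def consistent_weight_def sum_distrib_left[symmetric]
        sum.inter_filter[OF assms])
qed

lemma consistent_weight_nonneg: "0 < p \<Longrightarrow> p < 1 \<Longrightarrow> 0 \<le> consistent_weight p E V h q a"
  unfolding consistent_weight_def by (intro sum_nonneg) (simp add: weight_pos less_imp_le)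

lemma consistent_weight_le_total:
  "finite V \<Longrightarrow> 0 < p \<Longrightarrow> p < 1 \<Longrightarrow> consistent_weight p E V h q a \<le> total_weight p E V h"
  unfolding consistent_weight_def total_weight_def
  by (intro sum_mono2) (auto simp: weight_pos less_imp_le)

lemma consistent_weight_None: "q \<in> V \<Longrightarrow> consistent_weight p E V h q None = weight p E h q"
proof -
  assume "q \<in> V"
  then have "{v\<in>V. None \<in> correct_answers E q v} = {q}"
    by (auto simp: correct_answers_def)
  then show ?thesis by (simp add: consistent_weight_def)
qed

lemma consistent_weight_Some_le:
  assumes "finite V" "0 < p" "p < 1" "q \<in> V"
  shows "consistent_weight p E V h q (Some u) \<le> total_weight p E V h - weight p E h q"
proof -
  have "consistent_weight p E V h q (Some u) \<le> (\<Sum>v\<in>V - {q}. weight p E h v)"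
    unfolding consistent_weight_def using assms
    by (intro sum_mono2) (auto simp: weight_pos less_imp_le correct_answers_def)
  also have "\<dots> = total_weight p E V h - weight p E h q"
    using assms by (simp add: total_weight_def sum_diff1)
  finally show ?thesis .
qed

lemma consistent_weight_Some_le_behind:
  assumes "finite V" "0 < p" "p < 1"
  shows "consistent_weight p E V h q (Some u)
    \<le> (\<Sum>v\<in>{v\<in>V. gdist E u v + 1 = gdist E q v}. weight p E h v)"
  unfolding consistent_weight_def using assms
  by (intro sum_mono2) (auto simp: weight_pos less_imp_le correct_answers_def split: if_splits)

lemma yes_surplus_Nil [simp]: "yes_surplus [] v = 0"
  by (simp add: yes_surplus_def)

lemma yes_surplus_snoc [simp]:
  "yes_surplus (h @ [(q, a)]) v = yes_surplus h v + (if q = v then (if a = None then 1 else -1) else 0)"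
  by (simp add: yes_surplus_def)

lemma queried_if_yes_surplus_nonzero: "yes_surplus h v \<noteq> 0 \<Longrightarrow> v \<in> fst ` set h"
  by (induction h rule: rev_induct) (auto split: if_splits)

definition dist_sum :: "real \<Rightarrow> (nat \<Rightarrow> nat \<Rightarrow> bool) \<Rightarrow> nat set \<Rightarrow> history \<Rightarrow> nat \<Rightarrow> real" where
  "dist_sum p E V h q = (\<Sum>v\<in>V. weight p E h v * gdist E q v)"

definition weighted_median :: "real \<Rightarrow> (nat \<Rightarrow> nat \<Rightarrow> bool) \<Rightarrow> nat set \<Rightarrow> history \<Rightarrow> nat" where
  "weighted_median p E V h = (SOME q. q \<in> V \<and> (\<forall>q'\<in>V. dist_sum p E V h q \<le> dist_sum p E V h q'))"

definition heavy :: "real \<Rightarrow> (nat \<Rightarrow> nat \<Rightarrow> bool) \<Rightarrow> nat set \<Rightarrow> history \<Rightarrow> nat \<Rightarrow> bool" where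
  "heavy p E V h v \<longleftrightarrow> v \<in> V \<and> total_weight p E V h < 2 * weight p E h v"

definition search_action :: "real \<Rightarrow> (nat \<Rightarrow> nat \<Rightarrow> bool) \<Rightarrow> nat set \<Rightarrow> int \<Rightarrow> history \<Rightarrow> action" where
  "search_action p E V K h =
    (if \<exists>v. K \<le> yes_surplus h v then Output (SOME v. K \<le> yes_surplus h v)
     else if \<exists>v. heavy p E V h v then Ask (SOME v. heavy p E V h v)
     else Ask (weighted_median p E V h))"

definition search_alg :: "real \<Rightarrow> (nat \<Rightarrow> nat \<Rightarrow> bool) \<Rightarrow> nat set \<Rightarrow> int \<Rightarrow> history \<Rightarrow> action pmf" where
  "search_alg p E V K h = return_pmf (search_action p E V K h)"

lemma weighted_median_minimal:
  assumes "finite V" "V \<noteq> {}"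
  shows "weighted_median p E V h \<in> V"
    and "\<And>q'. q' \<in> V \<Longrightarrow> dist_sum p E V h (weighted_median p E V h) \<le> dist_sum p E V h q'"
proof -
  have "Min (dist_sum p E V h ` V) \<in> dist_sum p E V h ` V"
    using assms by simp
  then obtain q where "q \<in> V" "dist_sum p E V h q = Min (dist_sum p E V h ` V)"
    by auto
  then have "\<exists>q. q \<in> V \<and> (\<forall>q'\<in>V. dist_sum p E V h q \<le> dist_sum p E V h q')"
    using assms by auto
  from someI_ex[OF this] show "weighted_median p E V h \<in> V"
    and "\<And>q'. q' \<in> V \<Longrightarrow> dist_sum p E V h (weighted_median p E V h) \<le> dist_sum p E V h q'"
    unfolding weighted_median_def by blast+
qed

lemma search_action_OutputD:
  "search_action p E V K h = Output v \<Longrightarrow> K \<le> yes_surplus h v"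
  unfolding search_action_def by (auto split: if_splits intro: someI_ex)

lemma search_action_AskD:
  assumes "search_action p E V K h = Ask q"
  shows "\<And>v. yes_surplus h v < K"
    and "(\<exists>v. heavy p E V h v) \<Longrightarrow> heavy p E V h q"
    and "\<not> (\<exists>v. heavy p E V h v) \<Longrightarrow> q = weighted_median p E V h"
  using assms unfolding search_action_def by (auto simp: not_le split: if_splits intro: someI_ex)

lemma search_action_Ask_in_V:
  assumes "finite V" "V \<noteq> {}" "search_action p E V K h = Ask q"
  shows "q \<in> V"
  using search_action_AskD(2,3)[OF assms(3)] weighted_median_minimal(1)[OF assms(1,2)]
  by (auto simp: heavy_def)

lemma valid_search_alg: "finite V \<Longrightarrow> V \<noteq> {} \<Longrightarrow> valid_alg V (search_alg p E V K)"
  unfolding valid_alg_def search_alg_def by (auto intro: search_action_Ask_in_V)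

section \<open>Analysis for a fixed target and adversary\<close>

locale noisy_search =
  fixes p :: real and E :: "nat \<Rightarrow> nat \<Rightarrow> bool" and V :: "nat set" and K :: int
    and t :: nat and adv :: "history \<Rightarrow> nat \<Rightarrow> nat option \<times> nat option"
  assumes graph: "graph_ok V E" and p_pos: "0 < p" and p_less_half: "p < 1/2"
    and K_pos: "1 \<le> K" and target: "t \<in> V" and adversary: "valid_adversary V E t adv"
begin

abbreviation "alg \<equiv> search_alg p E V K"
abbreviation "W h \<equiv> total_weight p E V h"
abbreviation "share h q a \<equiv> consistent_weight p E V h q a / W h"
abbreviation "correct h q \<equiv> fst (adv h q)"
abbreviation "erroneous h q \<equiv> snd (adv h q)"

lemma finite_V: "finite V" and V_nonempty: "V \<noteq> {}"
  using graph by (auto simp: graph_ok_def)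

lemma p_less_1: "p < 1"
  using p_less_half by simp

lemma total_weight_pos: "0 < W h"
  unfolding total_weight_def using finite_V target weight_pos[OF p_pos p_less_1]
  by (intro sum_pos2) (auto intro: less_imp_le)

lemma share_nonneg: "0 \<le> share h q a"
  by (intro divide_nonneg_pos consistent_weight_nonneg p_pos p_less_1 total_weight_pos)

lemma share_le_1: "share h q a \<le> 1"
  using consistent_weight_le_total[OF finite_V p_pos p_less_1, of E h q a] total_weight_pos[of h]
  by simp

lemma total_weight_snoc_ratio: "W (h @ [(q, a)]) = update_ratio p (share h q a) * W h"
proof -
  have "update_ratio p (share h q a) * W h
      = 2 * p * W h + 2 * (1 - 2 * p) * consistent_weight p E V h q a"
    using total_weight_pos[of h] by (simp add: update_ratio_def field_simps)
  then show ?thesis using total_weight_snoc[OF finite_V] by simp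
qed

lemma finite_set_pmf_alg: "finite (set_pmf (alg h))"
  by (simp add: search_alg_def)

lemma finite_set_pmf_run_alg: "finite (set_pmf (run alg p adv k))"
  by (rule finite_set_pmf_run[OF finite_set_pmf_alg])

lemma ask_in_V: "search_action p E V K h = Ask q \<Longrightarrow> q \<in> V"
  by (rule search_action_Ask_in_V[OF finite_V V_nonempty])

lemma correct_answer: "q \<in> V \<Longrightarrow> correct h q \<in> correct_answers E q t"
  using adversary by (auto simp: valid_adversary_def)

definition log_share :: "history \<Rightarrow> real" where
  "log_share h = log 2 (weight p E h t / W h)"

lemma log_share_Nil: "log_share [] = - log 2 (card V)"
  using finite_V V_nonempty by (simp add: log_share_def total_weight_def log_divide)

lemma log_share_nonpos: "log_share h \<le> 0"
proof -
  have "weight p E h t \<le> W h"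
    unfolding total_weight_def using finite_V target weight_pos[OF p_pos p_less_1]
    by (intro member_le_sum) (auto intro: less_imp_le)
  then show ?thesis
    unfolding log_share_def using weight_pos[OF p_pos p_less_1] total_weight_pos by simp
qed

lemma log_share_snoc:
  "log_share (h @ [(q, a)]) =
    log_share h + log 2 (answer_factor p E (q, a) t) - log 2 (update_ratio p (share h q a))"
proof -
  have "answer_factor p E (q, a) t > 0" "update_ratio p (share h q a) > 0"
    using p_pos p_less_1 update_ratio_pos[OF p_pos p_less_half share_nonneg]
    by (auto simp: answer_factor_def)
  then show ?thesis
    using weight_pos[OF p_pos p_less_1, of E h t] total_weight_pos[of h]
    by (simp add: log_share_def total_weight_snoc_ratio log_mult log_divide)
qed

lemma log_share_drift:
  assumes "q \<in> V"
  shows "log_share h + Ip p -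
      (p * log 2 (update_ratio p (share h q (erroneous h q))) +
       (1 - p) * log 2 (update_ratio p (share h q (correct h q))))
    \<le> p * log_share (h @ [(q, erroneous h q)]) + (1 - p) * log_share (h @ [(q, correct h q)])"
proof -
  have correct_factor: "answer_factor p E (q, correct h q) t = 2 * (1 - p)"
    using correct_answer[OF assms] by (simp add: answer_factor_def)
  have "p * log 2 (2 * p) \<le> p * log 2 (answer_factor p E (q, erroneous h q) t)"
    using p_pos p_less_half by (intro mult_left_mono) (auto simp: answer_factor_def)
  then have "Ip p \<le> p * log 2 (answer_factor p E (q, erroneous h q) t)
      + (1 - p) * log 2 (answer_factor p E (q, correct h q) t)"
    unfolding Ip_altdef[OF p_pos p_less_1] correct_factor by linarith
  then show ?thesis
    by (simp add: log_share_snoc algebra_simps)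
qed

lemma balanced_query_log_update_nonpos:
  assumes "2 * consistent_weight p E V h q (correct h q) \<le> W h"
    and "consistent_weight p E V h q (correct h q) + consistent_weight p E V h q (erroneous h q) \<le> W h"
  shows "p * log 2 (update_ratio p (share h q (erroneous h q))) +
      (1 - p) * log 2 (update_ratio p (share h q (correct h q))) \<le> 0"
proof -
  have "share h q (correct h q) \<le> 1/2" "share h q (correct h q) + share h q (erroneous h q) \<le> 1"
    using assms total_weight_pos[of h] by (simp_all add: field_simps)
  then have "(1 - p) * log 2 (update_ratio p (share h q (correct h q))) +
      p * log 2 (update_ratio p (share h q (erroneous h q))) \<le> 0"
    by (intro expected_log_update_ratio_nonpos[OF p_pos p_less_half] share_nonneg)
  then show ?thesis by linarith
qed

text \<open>Away from the target the correct answer names a neighbour, so it is inconsistent with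
  the queried vertex itself, which carries more than half of the weight.\<close>
lemma heavy_query_balanced:
  assumes "heavy p E V h q" "q \<noteq> t"
  shows "2 * consistent_weight p E V h q (correct h q) \<le> W h"
    and "consistent_weight p E V h q (correct h q) + consistent_weight p E V h q (erroneous h q) \<le> W h"
proof -
  have "q \<in> V" and heavy: "W h < 2 * weight p E h q"
    using assms by (auto simp: heavy_def)
  obtain u where "correct h q = Some u"
    using correct_answer[OF \<open>q \<in> V\<close>, of h] assms(2) by (auto simp: correct_answers_def)
  then have c: "consistent_weight p E V h q (correct h q) \<le> W h - weight p E h q"
    using consistent_weight_Some_le[OF finite_V p_pos p_less_1 \<open>q \<in> V\<close>] by simp
  have "consistent_weight p E V h q (erroneous h q) \<le> weight p E h q
      \<or> consistent_weight p E V h q (erroneous h q) \<le> W h - weight p E h q"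
    using consistent_weight_None[OF \<open>q \<in> V\<close>]
      consistent_weight_Some_le[OF finite_V p_pos p_less_1 \<open>q \<in> V\<close>]
    by (cases "erroneous h q") auto
  with c heavy show "2 * consistent_weight p E V h q (correct h q) \<le> W h"
    and "consistent_weight p E V h q (correct h q) + consistent_weight p E V h q (erroneous h q) \<le> W h"
    by auto
qed

lemma median_query_balanced:
  assumes "\<not> (\<exists>v. heavy p E V h v)" "q = weighted_median p E V h"
  shows "2 * consistent_weight p E V h q a \<le> W h"
proof (cases a)
  case None
  have "q \<in> V" using weighted_median_minimal(1)[OF finite_V V_nonempty] assms(2) by simp
  then show ?thesis using assms(1) None consistent_weight_None by (force simp: heavy_def)
next
  case (Some u)
  show ?thesis
  proof (cases "E q u")
    case True
    have "2 * (\<Sum>v\<in>{v\<in>V. gdist E u v + 1 = gdist E q v}. weight p E h v) \<le> W h"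
      unfolding total_weight_def
      using weighted_median_minimal(2)[OF finite_V V_nonempty] assms(2) weight_pos[OF p_pos p_less_1]
      by (intro weighted_median_halves[OF graph _ True]) (auto simp: dist_sum_def less_imp_le)
    then show ?thesis
      using consistent_weight_Some_le_behind[OF finite_V p_pos p_less_1, of E h q u] Some by simp
  next
    case False
    then have "{v\<in>V. a \<in> correct_answers E q v} = {}"
      using Some by (auto simp: correct_answers_def)
    then have "consistent_weight p E V h q a = 0"
      unfolding consistent_weight_def by (simp only: sum.empty)
    then show ?thesis using total_weight_pos[of h] by simp
  qed
qed

lemma expected_log_update_le:
  assumes "search_action p E V K h = Ask q"
  shows "p * log 2 (update_ratio p (share h q (erroneous h q))) +
      (1 - p) * log 2 (update_ratio p (share h q (correct h q))) \<le> (if q = t then 1 else 0)"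
proof (cases "q = t \<and> (\<exists>v. heavy p E V h v)")
  case True
  have "log 2 (update_ratio p (share h q a)) \<le> 1" for a
    using log_update_ratio_le_1[OF p_pos p_less_half share_nonneg share_le_1] .
  then have "p * log 2 (update_ratio p (share h q (erroneous h q))) +
      (1 - p) * log 2 (update_ratio p (share h q (correct h q))) \<le> p * 1 + (1 - p) * 1"
    using p_pos p_less_1 by (intro add_mono mult_left_mono) auto
  then show ?thesis using True by simp
next
  case False
  have "2 * consistent_weight p E V h q (correct h q) \<le> W h
      \<and> consistent_weight p E V h q (correct h q) + consistent_weight p E V h q (erroneous h q) \<le> W h"
  proof (cases "\<exists>v. heavy p E V h v")
    case True
    with False have "q \<noteq> t" by blast
    with search_action_AskD(2)[OF assms True] show ?thesis
      by (blast intro: heavy_query_balanced)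
  next
    case no_heavy: False
    then have "q = weighted_median p E V h"
      by (rule search_action_AskD(3)[OF assms])
    then show ?thesis
      using median_query_balanced[OF no_heavy, of q "correct h q"]
        median_query_balanced[OF no_heavy, of q "erroneous h q"] by simp
  qed
  then have "p * log 2 (update_ratio p (share h q (erroneous h q))) +
      (1 - p) * log 2 (update_ratio p (share h q (correct h q))) \<le> 0"
    by (intro balanced_query_log_update_nonpos) auto
  moreover have "0 \<le> (if q = t then 1 else 0 :: real)"
    by simp
  ultimately show ?thesis
    by linarith
qed

definition capped_surplus :: "history \<Rightarrow> real" where
  "capped_surplus h = min (yes_surplus h t) K"

lemma capped_surplus_drift:
  assumes "search_action p E V K h = Ask q"
  shows "capped_surplus h + (if q = t then 1 - 2 * p else 0)
    \<le> p * capped_surplus (h @ [(q, erroneous h q)]) + (1 - p) * capped_surplus (h @ [(q, correct h q)])"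
proof (cases "q = t")
  case True
  have "yes_surplus h t < K"
    by (rule search_action_AskD(1)[OF assms])
  moreover have "correct h q = None"
    using correct_answer[OF ask_in_V[OF assms], of h] True by (simp add: correct_answers_def)
  ultimately have "capped_surplus (h @ [(q, correct h q)]) = capped_surplus h + 1"
    and "capped_surplus h - 1 \<le> capped_surplus (h @ [(q, erroneous h q)])"
    using True by (auto simp: capped_surplus_def)
  then show ?thesis
    using True p_pos
      mult_left_mono[of "capped_surplus h - 1" "capped_surplus (h @ [(q, erroneous h q)])" p]
    by (simp add: algebra_simps)
next
  case False
  then show ?thesis by (simp add: capped_surplus_def algebra_simps)
qed

text \<open>Querying the target itself may not raise its weight share, but then it raises
  the capped yes-surplus instead; the scale 1/(1-2p) makes up for this.\<close>
definition progress :: "state \<Rightarrow> real" where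
  "progress s = (case s of
      Running h \<Rightarrow> log_share h + capped_surplus h / (1 - 2 * p)
    | Halted v \<Rightarrow> K / (1 - 2 * p))"

lemma progress_le: "progress s \<le> K / (1 - 2 * p)"
proof (cases s)
  case (Running h)
  have "capped_surplus h / (1 - 2 * p) \<le> K / (1 - 2 * p)"
    using p_less_half by (intro divide_right_mono) (auto simp: capped_surplus_def)
  then show ?thesis using Running log_share_nonpos[of h] by (simp add: progress_def)
qed (simp add: progress_def)

lemma progress_Ask:
  assumes "search_action p E V K h = Ask q"
  shows "progress (Running h) + Ip p
    \<le> p * progress (Running (h @ [(q, erroneous h q)]))
      + (1 - p) * progress (Running (h @ [(q, correct h q)]))"
proof -
  have "(if q = t then 1 - 2 * p else 0) / (1 - 2 * p) = (if q = t then 1 else 0)"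
    using p_less_half by simp
  then show ?thesis
    using log_share_drift[OF ask_in_V[OF assms], of h] expected_log_update_le[OF assms]
      divide_right_mono[OF capped_surplus_drift[OF assms], of "1 - 2 * p"] p_less_half
    by (simp add: progress_def add_divide_distrib diff_divide_distrib algebra_simps)
qed

lemma progress_step:
  "progress s + Ip p * measure_pmf.prob (step alg p adv s) {s. is_running s}
    \<le> measure_pmf.expectation (step alg p adv s) progress"
proof (cases s)
  case (Halted v)
  then show ?thesis by (simp add: step_def is_running_def)
next
  case (Running h)
  show ?thesis
  proof (cases "search_action p E V K h")
    case (Output v)
    then have "step alg p adv (Running h) = return_pmf (Halted v)"
      by (intro step_Running_Output) (simp add: search_alg_def)
    then show ?thesis using Running progress_le[of s] by (simp add: progress_def is_running_def)
  next
    case (Ask q)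
    then have "alg h = return_pmf (Ask q)" by (simp add: search_alg_def)
    then show ?thesis
      using Running progress_Ask[OF Ask] p_pos p_less_1
      by (simp add: expectation_step_Ask prob_running_step_Ask)
  qed
qed

lemma expected_queries_upto_le:
  "expected_queries_upto alg p adv k \<le> (log 2 (card V) + K / (1 - 2 * p)) / Ip p"
proof -
  have "progress (Running []) + Ip p * expected_queries_upto alg p adv k
      \<le> measure_pmf.expectation (run alg p adv k) progress"
    by (rule expectation_run_drift[OF finite_set_pmf_alg progress_step])
  also have "\<dots> \<le> K / (1 - 2 * p)"
    using progress_le
    by (intro measure_pmf.integral_le_const integrable_measure_pmf_finite finite_set_pmf_run_alg) auto
  finally show ?thesis
    using Ip_pos[OF p_pos p_less_half] K_pos
    by (simp add: progress_def log_share_Nil capped_surplus_def field_simps)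
qed

definition odds :: real where
  "odds = (1 - p) / p"

lemma odds_gt_1: "1 < odds"
  using p_pos p_less_half by (simp add: odds_def field_simps)

definition queried_others :: "history \<Rightarrow> nat set" where
  "queried_others h = fst ` set h - {t}"

lemma finite_queried_others [simp]: "finite (queried_others h)"
  by (simp add: queried_others_def)

text \<open>At a queried non-target vertex the correct answer is never "yes", and
  p \<cdot> odds + (1 - p) / odds = 1; a newly queried vertex enters the sum with value 1.\<close>
definition error_mass :: "state \<Rightarrow> real" where
  "error_mass s = (case s of
      Running h \<Rightarrow> (\<Sum>v\<in>queried_others h. odds powr yes_surplus h v)
    | Halted v \<Rightarrow> (if v = t then 0 else odds powr K))"

lemma error_mass_nonneg: "0 \<le> error_mass s"
  by (auto simp: error_mass_def split: state.split intro!: sum_nonneg)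

lemma error_mass_snoc:
  assumes "q \<noteq> t"
  shows "error_mass (Running (h @ [(q, a)])) =
    odds powr yes_surplus (h @ [(q, a)]) q + (\<Sum>v\<in>queried_others h - {q}. odds powr yes_surplus h v)"
proof -
  have "queried_others (h @ [(q, a)]) = insert q (queried_others h - {q})"
    using assms by (auto simp: queried_others_def)
  then have "error_mass (Running (h @ [(q, a)])) =
      (\<Sum>v\<in>insert q (queried_others h - {q}). odds powr yes_surplus (h @ [(q, a)]) v)"
    by (simp only: error_mass_def state.case)
  also have "\<dots> = odds powr yes_surplus (h @ [(q, a)]) q
      + (\<Sum>v\<in>queried_others h - {q}. odds powr yes_surplus (h @ [(q, a)]) v)"
    by (rule sum.insert) auto
  also have "(\<Sum>v\<in>queried_others h - {q}. odds powr yes_surplus (h @ [(q, a)]) v)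
      = (\<Sum>v\<in>queried_others h - {q}. odds powr yes_surplus h v)"
    by (intro sum.cong) auto
  finally show ?thesis .
qed

lemma error_mass_plus_one_ge:
  assumes "q \<noteq> t"
  shows "odds powr yes_surplus h q + (\<Sum>v\<in>queried_others h - {q}. odds powr yes_surplus h v)
    \<le> error_mass (Running h) + 1"
proof (cases "q \<in> queried_others h")
  case True
  then show ?thesis by (simp add: error_mass_def sum.remove)
next
  case False
  then have "yes_surplus h q = 0"
    using queried_if_yes_surplus_nonzero assms by (auto simp: queried_others_def)
  with False show ?thesis
    by (auto simp: error_mass_def queried_others_def)
qed

lemma error_mass_Ask:
  assumes "search_action p E V K h = Ask q"
  shows "p * error_mass (Running (h @ [(q, erroneous h q)]))
      + (1 - p) * error_mass (Running (h @ [(q, correct h q)]))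
    \<le> error_mass (Running h) + 1"
proof (cases "q = t")
  case True
  then have "error_mass (Running (h @ [(q, a)])) = error_mass (Running h)" for a
    by (auto simp: error_mass_def queried_others_def intro!: sum.cong)
  then show ?thesis by (simp add: algebra_simps)
next
  case False
  define s where "s = odds powr yes_surplus h q"
  obtain u where "correct h q = Some u"
    using correct_answer[OF ask_in_V[OF assms], of h] False by (auto simp: correct_answers_def)
  then have correct: "odds powr yes_surplus (h @ [(q, correct h q)]) q = s / odds"
    using odds_gt_1 by (simp add: s_def powr_diff)
  have "odds powr yes_surplus (h @ [(q, erroneous h q)]) q \<le> odds powr (yes_surplus h q + 1)"
    using odds_gt_1 by simp
  also have "\<dots> = s * odds"
    using odds_gt_1 by (simp add: s_def powr_add)
  finally have "p * odds powr yes_surplus (h @ [(q, erroneous h q)]) q \<le> p * (s * odds)"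
    using p_pos by (intro mult_left_mono) auto
  moreover have "p * (s * odds) + (1 - p) * (s / odds) = s"
    using p_pos p_less_half by (simp add: odds_def field_simps)
  ultimately have "p * odds powr yes_surplus (h @ [(q, erroneous h q)]) q
      + (1 - p) * odds powr yes_surplus (h @ [(q, correct h q)]) q \<le> s"
    unfolding correct by linarith
  then show ?thesis
    using error_mass_plus_one_ge[OF False, of h]
    by (simp add: error_mass_snoc[OF False] s_def algebra_simps)
qed

lemma error_mass_step:
  "measure_pmf.expectation (step alg p adv s) error_mass
    \<le> error_mass s + measure_pmf.prob (step alg p adv s) {s. is_running s}"
proof (cases s)
  case (Halted v)
  then show ?thesis by (simp add: step_def is_running_def)
next
  case (Running h)
  show ?thesis
  proof (cases "search_action p E V K h")
    case (Output v)
    then have "step alg p adv (Running h) = return_pmf (Halted v)"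
      by (intro step_Running_Output) (simp add: search_alg_def)
    moreover have "error_mass (Halted v) \<le> error_mass (Running h)"
    proof (cases "v = t")
      case True
      then show ?thesis using error_mass_nonneg[of "Running h"] by (simp add: error_mass_def)
    next
      case False
      have "K \<le> yes_surplus h v"
        by (rule search_action_OutputD[OF Output])
      then have "v \<in> queried_others h"
        using queried_if_yes_surplus_nonzero[of h v] K_pos False by (auto simp: queried_others_def)
      have "odds powr K \<le> odds powr yes_surplus h v"
        using odds_gt_1 \<open>K \<le> yes_surplus h v\<close> by simp
      also have "\<dots> \<le> (\<Sum>v\<in>queried_others h. odds powr yes_surplus h v)"
        using \<open>v \<in> queried_others h\<close> by (intro member_le_sum) auto
      finally show ?thesis using False by (simp add: error_mass_def)
    qed
    ultimately show ?thesis using Running by (simp add: is_running_def)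
  next
    case (Ask q)
    then have "alg h = return_pmf (Ask q)" by (simp add: search_alg_def)
    then show ?thesis
      using Running error_mass_Ask[OF Ask] p_pos p_less_1
      by (simp add: expectation_step_Ask prob_running_step_Ask)
  qed
qed

lemma wrong_output_indicator_le: "odds powr K * indicator {Halted v |v. v \<noteq> t} s \<le> error_mass s"
  using error_mass_nonneg[of s] by (cases s) (auto simp: error_mass_def)

lemma wrong_output_prob_le:
  "measure_pmf.prob (run alg p adv k) {Halted v |v. v \<noteq> t}
    \<le> (log 2 (card V) + K / (1 - 2 * p)) / Ip p / odds powr K"
proof -
  let ?M = "run alg p adv k" and ?wrong = "{Halted v |v. v \<noteq> t}"
  have "odds powr K * measure_pmf.prob ?M ?wrong
      = measure_pmf.expectation ?M (\<lambda>s. odds powr K * indicator ?wrong s)"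
    by simp
  also have "\<dots> \<le> measure_pmf.expectation ?M error_mass"
    by (intro integral_mono integrable_measure_pmf_finite finite_set_pmf_run_alg
        wrong_output_indicator_le)
  also have "\<dots> \<le> error_mass (Running []) + 1 * expected_queries_upto alg p adv k"
    by (rule expectation_run_drift_le[OF finite_set_pmf_alg]) (simp add: error_mass_step)
  also have "\<dots> \<le> (log 2 (card V) + K / (1 - 2 * p)) / Ip p"
    using expected_queries_upto_le[of k] by (simp add: error_mass_def queried_others_def)
  finally have "odds powr K * measure_pmf.prob ?M ?wrong \<le> (log 2 (card V) + K / (1 - 2 * p)) / Ip p" .
  moreover have "0 < odds powr K"
    using odds_gt_1 by simp
  ultimately show ?thesis
    by (subst pos_le_divide_eq) (simp_all add: mult.commute)
qed

end

lemma search_alg_guarantees: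
  assumes "graph_ok V E" "0 < p" "p < 1/2" "1 \<le> K" "t \<in> V" "valid_adversary V E t adv"
  defines "B \<equiv> (log 2 (card V) + K / (1 - 2 * p)) / Ip p"
  shows "expected_queries (search_alg p E V K) p adv \<le> ennreal B"
    and "1 - B / ((1 - p) / p) powr K \<le> success_prob (search_alg p E V K) p adv t"
proof -
  interpret noisy_search p E V K t adv
    using assms by unfold_locales
  show "expected_queries (search_alg p E V K) p adv \<le> ennreal B"
    unfolding B_def by (rule expected_queries_le[OF expected_queries_upto_le])
  show "1 - B / ((1 - p) / p) powr K \<le> success_prob (search_alg p E V K) p adv t"
    unfolding B_def odds_def[symmetric]
    by (rule success_prob_ge[OF expected_queries_upto_le wrong_output_prob_le])
qed

lemma search_alg_within_budget:
  fixes k :: nat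
  assumes "graph_ok V E" "0 < p" "p < 1/2" "1 \<le> k" "t \<in> V" "valid_adversary V E t adv"
    and budget: "k / (1 - 2 * p) \<le> D"
    and confidence: "(log 2 (card V) + k / (1 - 2 * p)) / Ip p \<le> \<delta> * ((1 - p) / p) powr k"
  shows "expected_queries (search_alg p E V k) p adv \<le> ennreal (1 / Ip p * (log 2 (card V) + D))"
    and "1 - \<delta> \<le> success_prob (search_alg p E V k) p adv t"
proof -
  note guarantees = search_alg_guarantees[of V E p k, OF assms(1-3) _ assms(5,6)]
  have "(log 2 (card V) + k / (1 - 2 * p)) / Ip p \<le> 1 / Ip p * (log 2 (card V) + D)"
    using budget Ip_pos[OF assms(2,3)] by (simp add: divide_right_mono)
  then show "expected_queries (search_alg p E V k) p adv \<le> ennreal (1 / Ip p * (log 2 (card V) + D))"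
    using guarantees(1) assms(4) ennreal_leI order.trans by fastforce
  have "0 < ((1 - p) / p) powr k"
    using assms(2,3) by simp
  then have "(log 2 (card V) + k / (1 - 2 * p)) / Ip p / ((1 - p) / p) powr k \<le> \<delta>"
    using confidence by (subst pos_divide_le_eq) (simp_all add: mult.commute)
  then show "1 - \<delta> \<le> success_prob (search_alg p E V k) p adv t"
    using guarantees(2) assms(4) by simp
qed

section \<open>Choice of the threshold\<close>

lemma mult_of_nat_le_power:
  fixes a b :: real
  assumes "0 \<le> a" "a \<le> 2 ^ j" "4 \<le> b"
  shows "a * j \<le> b ^ j"
proof -
  have "real j \<le> 2 ^ j"
    using less_exp[of j] by (metis less_imp_le of_nat_le_iff of_nat_numeral of_nat_power)
  then have "a * j \<le> 2 ^ j * 2 ^ j"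
    using assms by (intro mult_mono) auto
  also have "\<dots> = 4 ^ j"
    by (simp flip: power_mult_distrib)
  also have "\<dots> \<le> b ^ j"
    using assms by (intro power_mono) auto
  finally show ?thesis .
qed

lemma threshold_exists:
  fixes \<beta> r I :: real
  assumes "0 < \<beta>" "1 < r" "0 < I"
  obtains C where "\<And>n \<delta>. 2 \<le> n \<Longrightarrow> 0 < \<delta> \<Longrightarrow> \<delta> < 1/2 \<Longrightarrow>
    \<exists>k::nat. 1 \<le> k \<and> (log 2 n + \<beta> * k) / I \<le> \<delta> * r powr k \<and>
      \<beta> * k \<le> C * log 2 (log 2 n) + C * log 2 (1 / \<delta>)"
proof -
  obtain m :: nat where m: "4 < r ^ m"
    using real_arch_pow[OF \<open>1 < r\<close>] by blast
  define M where "M = (1 + \<beta> * m) / I"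
  define L where "L = max 0 (log 2 M)"
  have "0 < M"
    using assms by (simp add: M_def add_pos_nonneg)
  then have "M = 2 powr log 2 M" by simp
  also have "\<dots> \<le> 2 powr L" by (simp add: L_def)
  finally have "M \<le> 2 powr L" .
  show thesis
  proof (rule that)
    fix n \<delta> :: real
    assume "2 \<le> n" "0 < \<delta>" "\<delta> < 1/2"
    define x where "x = log 2 (log 2 n) + log 2 (1 / \<delta>)"
    define j where "j = nat \<lceil>x + L\<rceil>"
    have "1 \<le> log 2 n" "1 \<le> log 2 (1 / \<delta>)"
      using \<open>2 \<le> n\<close> \<open>0 < \<delta>\<close> \<open>\<delta> < 1/2\<close> by (simp_all add: field_simps)
    moreover have "0 \<le> log 2 (log 2 n)"
      using \<open>1 \<le> log 2 n\<close> by simp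
    ultimately have "1 \<le> x"
      unfolding x_def by linarith
    have "0 \<le> L"
      by (simp add: L_def)
    with \<open>1 \<le> x\<close> have j: "x + L \<le> j" "j \<le> x + L + 1"
      by (auto simp: j_def)
    with \<open>1 \<le> x\<close> \<open>0 \<le> L\<close> have "1 \<le> j"
      by linarith
    have "2 powr x = log 2 n / \<delta>"
      using \<open>1 \<le> log 2 n\<close> \<open>0 < \<delta>\<close> by (simp add: x_def powr_add)
    then have "log 2 n / \<delta> * M \<le> 2 powr x * 2 powr L"
      using \<open>1 \<le> log 2 n\<close> \<open>0 < \<delta>\<close> \<open>M \<le> 2 powr L\<close> by (simp only:) (intro mult_left_mono; simp)
    also have "\<dots> \<le> 2 ^ j"
      using j by (simp add: powr_realpow[symmetric] powr_add[symmetric] del: powr_realpow)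
    finally have "log 2 n / \<delta> * M * j \<le> (r ^ m) ^ j"
      using \<open>1 \<le> log 2 n\<close> \<open>0 < \<delta>\<close> \<open>0 < M\<close> m by (intro mult_of_nat_le_power) auto
    also have "\<dots> = r powr (m * j)"
      using \<open>1 < r\<close> by (subst powr_realpow) (auto simp: power_mult)
    finally have exp_bound: "log 2 n / \<delta> * M * j \<le> r powr (m * j)" .
    have "1 \<le> m * j"
      using m \<open>1 \<le> j\<close> by (cases m) auto
    have "log 2 n * 1 \<le> log 2 n * j" "1 * (\<beta> * m * j) \<le> log 2 n * (\<beta> * m * j)"
      using \<open>1 \<le> log 2 n\<close> \<open>1 \<le> j\<close> \<open>0 < \<beta>\<close> by (intro mult_left_mono mult_right_mono; simp)+
    then have "log 2 n + \<beta> * (m * j) \<le> log 2 n * (1 + \<beta> * m) * j"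
      by (simp add: algebra_simps)
    then have "(log 2 n + \<beta> * (m * j)) / I \<le> \<delta> * (log 2 n / \<delta> * M * j)"
      using \<open>0 < I\<close> \<open>0 < \<delta>\<close> by (simp add: M_def divide_right_mono)
    also have "\<dots> \<le> \<delta> * r powr (m * j)"
      using exp_bound by (rule mult_left_mono) (use \<open>0 < \<delta>\<close> in simp)
    finally have "(log 2 n + \<beta> * (m * j)) / I \<le> \<delta> * r powr (m * j)" .
    moreover have "\<beta> * m * j \<le> \<beta> * m * ((2 + L) * x)"
      using j \<open>1 \<le> x\<close> \<open>0 \<le> L\<close> \<open>0 < \<beta>\<close> mult_left_mono[of 1 x L]
      by (intro mult_left_mono) (auto simp: algebra_simps)
    moreover have "1 \<le> real (m * j)"
      using \<open>1 \<le> m * j\<close> by linarith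
    ultimately show "\<exists>k::nat. 1 \<le> k \<and> (log 2 n + \<beta> * k) / I \<le> \<delta> * r powr k \<and>
        \<beta> * k \<le> \<beta> * m * (2 + L) * log 2 (log 2 n) + \<beta> * m * (2 + L) * log 2 (1 / \<delta>)"
      by (intro exI[of _ "m * j"]) (simp add: x_def algebra_simps)
  qed
qed

theorem theorem3:
  fixes p :: real
  assumes "0 < p" and "p < 1/2"
  shows "\<exists>C n0. \<forall>(V :: nat set) E (\<delta> :: real).
           graph_ok V E \<longrightarrow> card V \<ge> n0 \<longrightarrow> 0 < \<delta> \<longrightarrow> \<delta> < 1/2 \<longrightarrow>
           (\<exists>alg. valid_alg V alg \<and>
              (\<forall>t\<in>V. \<forall>adv. valid_adversary V E t adv \<longrightarrow>
                 expected_queries alg p adv \<le>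
                   ennreal ((1 / Ip p) * (log 2 (card V) + C * log 2 (log 2 (card V))
                                          + C * log 2 (1 / \<delta>))) \<and>
                 success_prob alg p adv t \<ge> 1 - \<delta>))"
proof -
  have "0 < 1 / (1 - 2 * p)" "1 < (1 - p) / p" "0 < Ip p"
    using assms Ip_pos by (auto simp: field_simps)
  then obtain C where C: "\<And>n \<delta>. 2 \<le> n \<Longrightarrow> 0 < \<delta> \<Longrightarrow> \<delta> < 1/2 \<Longrightarrow>
      \<exists>k::nat. 1 \<le> k \<and> (log 2 n + 1 / (1 - 2 * p) * k) / Ip p \<le> \<delta> * ((1 - p) / p) powr k \<and>
        1 / (1 - 2 * p) * k \<le> C * log 2 (log 2 n) + C * log 2 (1 / \<delta>)"
    by (rule threshold_exists) blast
  show ?thesis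
  proof (intro exI[of _ C] exI[of _ 2] allI impI, goal_cases)
    case (1 V E \<delta>)
    then obtain k :: nat where k: "1 \<le> k"
      "(log 2 (card V) + k / (1 - 2 * p)) / Ip p \<le> \<delta> * ((1 - p) / p) powr k"
      "k / (1 - 2 * p) \<le> C * log 2 (log 2 (card V)) + C * log 2 (1 / \<delta>)"
      using C[of "card V" \<delta>] by auto
    have "valid_alg V (search_alg p E V k)"
      using 1 by (intro valid_search_alg) (auto simp: graph_ok_def)
    then show ?case
      using search_alg_within_budget[OF 1(1) assms k(1) _ _ k(3,2)]
      by (intro exI[of _ "search_alg p E V k"]) (simp add: add.assoc)
  qed
qed

end
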